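(* For all integers $2\le k\le n$, \[ \mathbb{P}_n(W_k\cap W_{k-1})=\frac{k}{n}-\frac{3}{2n}+\frac{(n-k+1)^2}{4n(n-1)}, \] i.e. this is the probability that both the $(k-1)$-th and $k$-th boundary steps of a uniformly random type-B permutation tableau of size $n$ are west steps.
   Context: A Ferrers diagram is a left-justified array of cells whose row lengths weakly decrease from top to bottom (rows of length $0$ are allowed). Its half-perimeter is the number of rows plus the number of columns. Its southeast boundary, traversed from the northeast corner to the southwest corner, consists of $n$ unit steps, each south or west; south steps correspond to rows and west steps to columns. We write $S_k$ (resp. $W_k$) for the event that the $k$-th step is south (resp. west). If the diagram has $c$ columns, the shifted Ferrers diagram is obtained by inserting $c$ new left-justified rows above it, of lengths $c,c-1,\dots,1$ from top to bottom; the rightmost cell of each inserted row is a diagonal cell. A type-B permutation tableau of size $n$ is a filling of a shifted Ferrers diagram of half-perimeter $n$ with $0$'s and $1$'s such that: (1) every column contains at least one $1$; (2) no $0$ has both a $1$ above it in its column and a $1$ to its left in its row; (3) if a diagonal cell contains $0$ then every cell of its row contains $0$. The boundary steps of the shifted diagram are those of the underlying Ferrers diagram. Let $\mathcal{B}_n$ be the set of such tableaux and $\mathbb{P}_n$ the uniform probability measure on $\mathcal{B}_n$. *)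

theory Defs
  imports Complex_Main
begin

text \<open>A Ferrers diagram of half-perimeter n is encoded by its southeast boundary word
  w :: bool list of length n, read from the northeast corner to the southwest corner;
  the k-th step (1-based) is w ! (k - 1), with True = south step (a row) and
  False = west step (a column).\<close>

definition south_step :: "bool list \<Rightarrow> nat \<Rightarrow> bool" where
  "south_step w k = (w ! (k - 1))"

definition west_step :: "bool list \<Rightarrow> nat \<Rightarrow> bool" where
  "west_step w k = (\<not> w ! (k - 1))"

fun rowlens :: "bool list \<Rightarrow> nat list" where
  "rowlens [] = []"
| "rowlens (True # w) = length (filter Not w) # rowlens w"
| "rowlens (False # w) = rowlens w"

definition ncols :: "bool list \<Rightarrow> nat" where
  "ncols w = length (filter Not w)"

text \<open>Cells (row, column) of the shifted diagram, rows numbered from 0 at the top and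
  columns from 0 at the left. Rows 0..c-1 are the inserted staircase rows (row i
  occupies columns i..c-1, lengths c, c-1, ..., 1 from top to bottom; its diagonal
  cell is (i,i), the topmost cell of column i); row c + r is the r-th row of the
  Ferrers diagram.\<close>
definition shifted_cells :: "bool list \<Rightarrow> (nat \<times> nat) set" where
  "shifted_cells w =
     {(i, j). i < ncols w \<and> i \<le> j \<and> j < ncols w}
     \<union> {(i, j). ncols w \<le> i \<and> i - ncols w < length (rowlens w)
               \<and> j < rowlens w ! (i - ncols w)}"

text \<open>A filling is given by the set F of cells containing 1.\<close>
definition is_typeB_tableau :: "bool list \<Rightarrow> (nat \<times> nat) set \<Rightarrow> bool" where
  "is_typeB_tableau w F \<longleftrightarrow>
     F \<subseteq> shifted_cells w
     \<and> (\<forall>j < ncols w. \<exists>i. (i, j) \<in> F)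
     \<and> (\<forall>i j. (i, j) \<in> shifted_cells w - F \<longrightarrow>
            \<not> ((\<exists>i' < i. (i', j) \<in> F) \<and> (\<exists>j' < j. (i, j') \<in> F)))
     \<and> (\<forall>i < ncols w. (i, i) \<notin> F \<longrightarrow> (\<forall>j. (i, j) \<notin> F))"

definition typeB_tableaux :: "nat \<Rightarrow> (bool list \<times> (nat \<times> nat) set) set" where
  "typeB_tableaux n = {(w, F). length w = n \<and> is_typeB_tableau w F}"

definition prob_B :: "nat \<Rightarrow> (bool list \<times> (nat \<times> nat) set \<Rightarrow> bool) \<Rightarrow> real" where
  "prob_B n P = real (card {t \<in> typeB_tableaux n. P t}) / real (card (typeB_tableaux n))"

end

(*
  Let T(w, m) be the number of type-B tableaux with boundary word w and m ones on the diagonal.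
  Three local moves determine T. A final south step is an empty row: T(wS, m) = T(w, m). A leading
  west step adds a rightmost column lying inside the staircase; the admissible fillings of that
  column give T(Wu, m) = m T(u, m - 1) + m T(u, m). At a corner S W, the corner cell is 0, or the
  only 1 of its column, or neither; deleting its row, its column, or the cell itself gives
  T(uSWv) = T(uWSv) + T(uSv) + T(uWv).

  Summing over all continuations x of a fixed length b, E(u, b, m) = sum_x T(ux, m) satisfies
  E(uS, b, m) = (b + 1) E(u, b, m) (push the final S through x with the corner rule), hence
  E(uWW, b, m) = E(u, b + 2, m) - (2b + 3) E(u, b + 1, m) + (b + 1)^2 E(u, b, m), while
  E([], b, m) = b! binom(b, m), so there are n! 2^n tableaux of size n. Taking for u the words of
  length k - 2 and b = n - k, the tableaux with west steps k - 1 and k number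
  Z(n) - (2(n - k) + 3) Z(n - 1) + (n - k + 1)^2 Z(n - 2) with Z(j) = j! 2^j; dividing by Z(n)
  gives the formula.
*)

theory Submission
  imports Defs
begin

lemma ncols_simps [simp]:
  "ncols [] = 0" "ncols (True # w) = ncols w" "ncols (False # w) = Suc (ncols w)"
  by (simp_all add: ncols_def)

lemma ncols_append [simp]: "ncols (u @ v) = ncols u + ncols v"
  by (simp add: ncols_def)

lemma ncols_le_length: "ncols w \<le> length w"
  by (simp add: ncols_def)

lemma rowlens_append: "rowlens (u @ v) = map (\<lambda>l. l + ncols v) (rowlens u) @ rowlens v"
  by (induction u rule: rowlens.induct) (simp_all add: ncols_def)

lemma rowlens_le_ncols: "l \<in> set (rowlens w) \<Longrightarrow> l \<le> ncols w"
  by (induction w rule: rowlens.induct) (auto simp: ncols_def)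

definition row_len :: "bool list \<Rightarrow> nat \<Rightarrow> nat" where
  "row_len w d = (if d < length (rowlens w) then rowlens w ! d else 0)"

lemma row_len_le_ncols: "row_len w d \<le> ncols w"
  unfolding row_len_def using rowlens_le_ncols nth_mem by fastforce

lemma row_len_append:
  "row_len (u @ v) d =
     (if d < length (rowlens u) then row_len u d + ncols v else row_len v (d - length (rowlens u)))"
  by (auto simp: row_len_def rowlens_append nth_append)

lemma row_len_Cons_south: "row_len (True # w) d = (if d = 0 then ncols w else row_len w (d - 1))"
  by (cases d) (simp_all add: row_len_def ncols_def)

lemma row_len_Cons_west [simp]: "row_len (False # u) d = row_len u d"
  by (simp add: row_len_def)

lemma mem_shifted_cells:
  "(i, j) \<in> shifted_cells w \<longleftrightarrow>
     (i < ncols w \<and> i \<le> j \<and> j < ncols w) \<or> (ncols w \<le> i \<and> j < row_len w (i - ncols w))"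
  unfolding shifted_cells_def row_len_def by auto

lemma shifted_cells_col_less: "(i, j) \<in> shifted_cells w \<Longrightarrow> j < ncols w"
  using row_len_le_ncols[of w] unfolding mem_shifted_cells by (meson less_le_trans)

lemma finite_shifted_cells: "finite (shifted_cells w)"
proof (rule finite_subset)
  show "shifted_cells w \<subseteq> {..<ncols w + length (rowlens w)} \<times> {..<ncols w}"
    using shifted_cells_col_less by (fastforce simp: shifted_cells_def)
qed simp

section \<open>Tableaux counted by their diagonal ones\<close>

lemma is_typeB_tableauI:
  assumes "F \<subseteq> shifted_cells w"
    and "\<And>j. j < ncols w \<Longrightarrow> \<exists>i. (i, j) \<in> F"
    and "\<And>i j i' j'. (i, j) \<in> shifted_cells w \<Longrightarrow> (i, j) \<notin> F \<Longrightarrow>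
           i' < i \<Longrightarrow> (i', j) \<in> F \<Longrightarrow> j' < j \<Longrightarrow> (i, j') \<in> F \<Longrightarrow> False"
    and "\<And>i j. i < ncols w \<Longrightarrow> (i, i) \<notin> F \<Longrightarrow> (i, j) \<notin> F"
  shows "is_typeB_tableau w F"
  using assms unfolding is_typeB_tableau_def by blast

lemma is_typeB_tableauD:
  assumes "is_typeB_tableau w F"
  shows "F \<subseteq> shifted_cells w"
    and "\<And>j. j < ncols w \<Longrightarrow> \<exists>i. (i, j) \<in> F"
    and "\<And>i j i' j'. (i, j) \<in> shifted_cells w \<Longrightarrow> (i, j) \<notin> F \<Longrightarrow>
           i' < i \<Longrightarrow> (i', j) \<in> F \<Longrightarrow> j' < j \<Longrightarrow> (i, j') \<in> F \<Longrightarrow> False"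
    and "\<And>i j. i < ncols w \<Longrightarrow> (i, i) \<notin> F \<Longrightarrow> (i, j) \<notin> F"
  using assms unfolding is_typeB_tableau_def by blast+

lemma typeB_tableau_col_less: "is_typeB_tableau w F \<Longrightarrow> (i, j) \<in> F \<Longrightarrow> j < ncols w"
  using is_typeB_tableauD(1) shifted_cells_col_less by blast

lemma finite_typeB_tableaux_shape: "finite {F. is_typeB_tableau w F}"
  by (rule finite_subset[of _ "Pow (shifted_cells w)"])
    (auto simp: finite_shifted_cells dest: is_typeB_tableauD(1))

definition diag_ones :: "bool list \<Rightarrow> (nat \<times> nat) set \<Rightarrow> nat" where
  "diag_ones w F = card {i. i < ncols w \<and> (i, i) \<in> F}"

definition tab_count :: "bool list \<Rightarrow> nat \<Rightarrow> nat" where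
  "tab_count w m = card {F. is_typeB_tableau w F \<and> diag_ones w F = m}"

lemma diag_ones_le_length: "diag_ones w F \<le> length w"
proof -
  have "diag_ones w F \<le> card {..<ncols w}"
    unfolding diag_ones_def by (rule card_mono) auto
  then show ?thesis
    using ncols_le_length[of w] by simp
qed

lemma card_typeB_tableaux_shape: "card {F. is_typeB_tableau w F} = (\<Sum>m\<le>length w. tab_count w m)"
proof -
  have "{F. is_typeB_tableau w F} = (\<Union>m\<le>length w. {F. is_typeB_tableau w F \<and> diag_ones w F = m})"
    using diag_ones_le_length by auto
  also have "card \<dots> = (\<Sum>m\<le>length w. tab_count w m)"
    unfolding tab_count_def
    by (rule card_UN_disjoint) (auto intro: finite_subset[OF _ finite_typeB_tableaux_shape])
  finally show ?thesis .
qed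

lemma tab_count_Nil: "tab_count [] m = (if m = 0 then 1 else 0)"
proof -
  have "shifted_cells [] = {}"
    by (auto simp: shifted_cells_def)
  then have "is_typeB_tableau [] F \<longleftrightarrow> F = {}" for F
    unfolding is_typeB_tableau_def by simp
  then have "{F. is_typeB_tableau [] F \<and> diag_ones [] F = m} = (if m = 0 then {{}} else {})"
    by (auto simp: diag_ones_def)
  then show ?thesis
    by (simp add: tab_count_def)
qed

lemma tab_count_snoc_south: "tab_count (w @ [True]) m = tab_count w m"
proof -
  have "row_len (w @ [True]) d = row_len w d" for d
    by (simp add: row_len_def rowlens_append nth_append)
  then have "shifted_cells (w @ [True]) = shifted_cells w"
    by (simp add: set_eq_iff mem_shifted_cells)
  then show ?thesis
    by (simp add: tab_count_def is_typeB_tableau_def diag_ones_def)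
qed

section \<open>A leading west step\<close>

definition skip :: "nat \<Rightarrow> nat \<Rightarrow> nat" where
  "skip c i = (if i < c then i else Suc i)"

lemma skip_less_skip_iff [simp]: "skip c a < skip c b \<longleftrightarrow> a < b"
  by (auto simp: skip_def)

lemma skip_inject [simp]: "skip c a = skip c b \<longleftrightarrow> a = b"
  by (auto simp: skip_def)

lemma skip_neq [simp]: "skip c a \<noteq> c" "c \<noteq> skip c a"
  by (auto simp: skip_def)

lemma skip_less_Suc_iff [simp]: "skip c a < Suc c \<longleftrightarrow> a < c"
  by (auto simp: skip_def)

lemma skip_id [simp]: "a < c \<Longrightarrow> skip c a = a"
  by (simp add: skip_def)

lemma skip_eq_below: "b < c \<Longrightarrow> skip c a = b \<longleftrightarrow> a = b" "b < c \<Longrightarrow> b = skip c a \<longleftrightarrow> a = b"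
  by (auto simp: skip_def)

lemma ex_skip_eq: "a \<noteq> c \<Longrightarrow> \<exists>i. a = skip c i"
  by (rule exI[of _ "if a < c then a else a - 1"]) (auto simp: skip_def)

lemma mem_shifted_cells_Cons_west:
  "(a, b) \<in> shifted_cells (False # u) \<longleftrightarrow>
     (b = ncols u \<and> a \<le> ncols u) \<or> (\<exists>i. a = skip (ncols u) i \<and> (i, b) \<in> shifted_cells u)"
  (is "?lhs \<longleftrightarrow> ?rhs")
proof
  let ?c = "ncols u"
  assume ?lhs
  then consider "a \<le> ?c" "a \<le> b" "b \<le> ?c" | "Suc ?c \<le> a" "b < row_len u (a - Suc ?c)"
    by (auto simp: mem_shifted_cells)
  then show ?rhs
  proof cases
    case 1
    then show ?thesis
      by (cases "b = ?c") (auto simp: mem_shifted_cells intro!: exI[of _ a])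
  next
    case 2
    then have "a = skip ?c (a - 1)" "(a - 1, b) \<in> shifted_cells u"
      by (auto simp: skip_def mem_shifted_cells)
    then show ?thesis
      by blast
  qed
next
  assume ?rhs
  then show ?lhs
    by (auto simp: mem_shifted_cells skip_def)
qed

text \<open>A tableau of shape \<open>False # u\<close> consists of a tableau \<open>F\<close> of shape \<open>u\<close>, whose rows from
  \<open>c = ncols u\<close> on move down by one to make room for the new staircase row \<open>c\<close> (hence \<open>skip c\<close>),
  and of the new rightmost column \<open>c\<close>, made of the staircase cells \<open>(i, c)\<close> with \<open>i \<le> c\<close>.
  \<open>X\<close> is the set of rows with a 1 in that column; \<open>admissible_col\<close> is rules (2) and (3) for the
  new column, \<open>D\<close> being the set of rows whose diagonal cell holds a 1.\<close>

definition add_col :: "nat \<Rightarrow> (nat \<times> nat) set \<Rightarrow> nat set \<Rightarrow> (nat \<times> nat) set" where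
  "add_col c F X = (\<lambda>(i, j). (skip c i, j)) ` F \<union> (\<lambda>i. (i, c)) ` X"

definition del_col :: "nat \<Rightarrow> (nat \<times> nat) set \<Rightarrow> (nat \<times> nat) set" where
  "del_col c H = {(i, j). (skip c i, j) \<in> H \<and> j \<noteq> c}"

definition col_rows :: "nat \<Rightarrow> (nat \<times> nat) set \<Rightarrow> nat set" where
  "col_rows c H = {i. (i, c) \<in> H}"

definition diag_rows :: "nat \<Rightarrow> (nat \<times> nat) set \<Rightarrow> nat set" where
  "diag_rows c F = {i. i < c \<and> (i, i) \<in> F}"

definition admissible_col :: "nat \<Rightarrow> nat set \<Rightarrow> nat set \<Rightarrow> bool" where
  "admissible_col c D X \<longleftrightarrow>
     X \<subseteq> {..c} \<and> X \<noteq> {} \<and> (\<forall>i\<in>X. i < c \<longrightarrow> i \<in> D) \<and> (\<forall>i\<in>D. \<forall>i'\<in>X. i' < i \<longrightarrow> i \<in> X)"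

lemma mem_add_col: "(a, b) \<in> add_col c F X \<longleftrightarrow> (b = c \<and> a \<in> X) \<or> (\<exists>i. a = skip c i \<and> (i, b) \<in> F)"
  unfolding add_col_def by auto

lemma mem_add_col_below: "a < c \<Longrightarrow> (a, b) \<in> add_col c F X \<longleftrightarrow> (a, b) \<in> F \<or> (b = c \<and> a \<in> X)"
  by (auto simp: mem_add_col skip_eq_below)

lemma add_col_hook_free:
  assumes F: "is_typeB_tableau u F" and X: "admissible_col (ncols u) (diag_rows (ncols u) F) X"
    and ab: "(a, b) \<in> shifted_cells (False # u)" "(a, b) \<notin> add_col (ncols u) F X"
    and i': "i' < a" "(i', b) \<in> add_col (ncols u) F X"
    and j': "j' < b" "(a, j') \<in> add_col (ncols u) F X"
  shows False
proof -
  let ?c = "ncols u"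
  have F_col: "(i, j) \<in> F \<Longrightarrow> j < ?c" for i j
    using typeB_tableau_col_less[OF F] .
  show False
  proof (cases "b = ?c")
    case True
    from j' True F_col obtain i0 where i0: "a = skip ?c i0" "(i0, j') \<in> F"
      by (auto simp: mem_add_col)
    have "a \<le> ?c"
      using ab(1) True F_col by (auto simp: mem_shifted_cells_Cons_west dest: shifted_cells_col_less)
    with i0 have "a < ?c" "i0 = a"
      by (auto simp: skip_def split: if_splits)
    with i0 have "(a, a) \<in> F"
      using is_typeB_tableauD(4)[OF F, of a j'] by auto
    moreover have "i' \<in> X"
      using i' True F_col by (auto simp: mem_add_col)
    ultimately have "a \<in> X"
      using X \<open>a < ?c\<close> i'(1) by (auto simp: admissible_col_def diag_rows_def)
    then show False
      using ab(2) True by (auto simp: mem_add_col)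
  next
    case False
    from ab False obtain i0 where i0: "a = skip ?c i0" "(i0, b) \<in> shifted_cells u"
      by (auto simp: mem_shifted_cells_Cons_west)
    have "b < ?c"
      using i0 shifted_cells_col_less by blast
    from i' False obtain i1 where "i' = skip ?c i1" "(i1, b) \<in> F"
      by (auto simp: mem_add_col)
    moreover from j' \<open>b < ?c\<close> obtain i2 where "a = skip ?c i2" "(i2, j') \<in> F"
      by (auto simp: mem_add_col)
    moreover have "(i0, b) \<notin> F"
      using ab i0 by (auto simp: mem_add_col)
    ultimately show False
      using is_typeB_tableauD(3)[OF F i0(2)] i0(1) i'(1) j'(1) by auto
  qed
qed

lemma typeB_add_col:
  assumes F: "is_typeB_tableau u F" and X: "admissible_col (ncols u) (diag_rows (ncols u) F) X"
  shows "is_typeB_tableau (False # u) (add_col (ncols u) F X)"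
proof (rule is_typeB_tableauI)
  let ?c = "ncols u" and ?H = "add_col (ncols u) F X"
  have X_le: "X \<subseteq> {..?c}" and X_diag: "\<And>i. i \<in> X \<Longrightarrow> i < ?c \<Longrightarrow> (i, i) \<in> F"
    using X by (auto simp: admissible_col_def diag_rows_def)
  show "?H \<subseteq> shifted_cells (False # u)"
    using X_le is_typeB_tableauD(1)[OF F] by (auto simp: add_col_def mem_shifted_cells_Cons_west)
  show "\<exists>i. (i, j) \<in> ?H" if "j < ncols (False # u)" for j
  proof (cases "j = ?c")
    case True
    then show ?thesis
      using X by (auto simp: admissible_col_def mem_add_col)
  next
    case False
    with that have "j < ?c"
      by simp
    then obtain i where "(i, j) \<in> F"
      using is_typeB_tableauD(2)[OF F] by blast
    then show ?thesis
      by (auto simp: mem_add_col)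
  qed
  show False if "(a, b) \<in> shifted_cells (False # u)" "(a, b) \<notin> ?H"
    and "i' < a" "(i', b) \<in> ?H" "j' < b" "(a, j') \<in> ?H" for a b i' j'
    using add_col_hook_free[OF F X that] .
  show "(i, j) \<notin> ?H" if "i < ncols (False # u)" "(i, i) \<notin> ?H" for i j
  proof (cases "i = ?c")
    case True
    then show ?thesis
      using that by (auto simp: mem_add_col)
  next
    case False
    then have "i < ?c"
      using that(1) by simp
    with that(2) have "(i, i) \<notin> F" "i \<notin> X"
      using X_diag by (auto simp: mem_add_col_below)
    then show ?thesis
      using is_typeB_tableauD(4)[OF F] \<open>i < ?c\<close> by (simp add: mem_add_col_below)
  qed
qed

lemma typeB_del_col:
  assumes H: "is_typeB_tableau (False # u) H"
  shows "is_typeB_tableau u (del_col (ncols u) H)"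
proof (rule is_typeB_tableauI)
  let ?c = "ncols u" and ?F = "del_col (ncols u) H"
  have mem_F: "(i, j) \<in> ?F \<longleftrightarrow> (skip ?c i, j) \<in> H \<and> j \<noteq> ?c" for i j
    by (simp add: del_col_def)
  have H_old: "(a, b) \<in> H \<Longrightarrow> b \<noteq> ?c \<Longrightarrow> \<exists>i. a = skip ?c i \<and> (i, b) \<in> shifted_cells u" for a b
    using is_typeB_tableauD(1)[OF H] by (auto simp: mem_shifted_cells_Cons_west)
  show "?F \<subseteq> shifted_cells u"
  proof (rule subsetI, clarify)
    fix i j
    assume "(i, j) \<in> ?F"
    with H_old[of "skip ?c i" j] show "(i, j) \<in> shifted_cells u"
      by (auto simp: mem_F)
  qed
  show "\<exists>i. (i, j) \<in> ?F" if j: "j < ncols u" for j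
  proof -
    obtain a where "(a, j) \<in> H"
      using j is_typeB_tableauD(2)[OF H, of j] by auto
    with H_old[of a j] j show ?thesis
      by (auto simp: mem_F)
  qed
  show False if "(i, j) \<in> shifted_cells u" "(i, j) \<notin> ?F"
    and "i' < i" "(i', j) \<in> ?F" "j' < j" "(i, j') \<in> ?F" for i j i' j'
  proof -
    have "j < ?c"
      using that(1) shifted_cells_col_less by blast
    then have "(skip ?c i, j) \<in> shifted_cells (False # u)" "(skip ?c i, j) \<notin> H"
      using that(1,2) by (auto simp: mem_shifted_cells_Cons_west mem_F)
    with that(3-6) show False
      using is_typeB_tableauD(3)[OF H] by (metis mem_F skip_less_skip_iff)
  qed
  show "(i, j) \<notin> ?F" if "i < ncols u" "(i, i) \<notin> ?F" for i j
    using that is_typeB_tableauD(4)[OF H, of i] by (auto simp: mem_F)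
qed

lemma admissible_col_rows:
  assumes H: "is_typeB_tableau (False # u) H"
  shows "admissible_col (ncols u) (diag_rows (ncols u) (del_col (ncols u) H)) (col_rows (ncols u) H)"
  unfolding admissible_col_def
proof (intro conjI ballI impI subsetI)
  let ?c = "ncols u"
  note H_cells = is_typeB_tableauD(1)[OF H]
  show "i \<in> {..?c}" if "i \<in> col_rows ?c H" for i
  proof -
    have "(i, ?c) \<in> shifted_cells (False # u)"
      using that H_cells by (auto simp: col_rows_def)
    then show ?thesis
      using shifted_cells_col_less[of _ ?c u] by (auto simp: mem_shifted_cells_Cons_west)
  qed
  show "col_rows ?c H \<noteq> {}"
    using is_typeB_tableauD(2)[OF H, of ?c] by (auto simp: col_rows_def)
  show "i \<in> diag_rows ?c (del_col ?c H)" if "i \<in> col_rows ?c H" "i < ?c" for i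
    using that is_typeB_tableauD(4)[OF H, of i ?c] by (auto simp: col_rows_def diag_rows_def del_col_def)
  show "i \<in> col_rows ?c H" if i: "i \<in> diag_rows ?c (del_col ?c H)" and i': "i' \<in> col_rows ?c H" "i' < i" for i i'
  proof (rule ccontr)
    assume "i \<notin> col_rows ?c H"
    moreover have "i < ?c" "(i, i) \<in> H"
      using i by (auto simp: diag_rows_def del_col_def)
    moreover have "(i, ?c) \<in> shifted_cells (False # u)"
      using \<open>i < ?c\<close> by (simp add: mem_shifted_cells_Cons_west)
    ultimately show False
      using is_typeB_tableauD(3)[OF H] i' by (simp add: col_rows_def) blast
  qed
qed

lemma add_col_del_col:
  assumes H: "is_typeB_tableau (False # u) H"
  shows "add_col (ncols u) (del_col (ncols u) H) (col_rows (ncols u) H) = H"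
proof -
  let ?c = "ncols u"
  have row_old: "\<exists>i. a = skip ?c i" if "(a, b) \<in> H" "b \<noteq> ?c" for a b
  proof -
    have "(a, b) \<in> shifted_cells (False # u)"
      using that(1) is_typeB_tableauD(1)[OF H] by blast
    with that(2) show ?thesis
      by (auto simp: mem_shifted_cells_Cons_west)
  qed
  have "(a, b) \<in> add_col ?c (del_col ?c H) (col_rows ?c H) \<longleftrightarrow> (a, b) \<in> H" for a b
    using row_old[of a b] by (cases "b = ?c") (auto simp: mem_add_col del_col_def col_rows_def)
  then show ?thesis
    by auto
qed

lemma
  assumes "\<And>i j. (i, j) \<in> F \<Longrightarrow> j \<noteq> c"
  shows del_col_add_col: "del_col c (add_col c F X) = F"
    and col_rows_add_col: "col_rows c (add_col c F X) = X"
  using assms by (auto simp: del_col_def col_rows_def mem_add_col)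

lemma diag_ones_add_col:
  "diag_ones (False # u) (add_col (ncols u) F X)
     = card (diag_rows (ncols u) F) + (if ncols u \<in> X then 1 else 0)"
proof -
  let ?c = "ncols u"
  have "{i. i < ncols (False # u) \<and> (i, i) \<in> add_col ?c F X}
      = diag_rows ?c F \<union> (if ?c \<in> X then {?c} else {})"
    by (auto simp: diag_rows_def mem_add_col skip_eq_below)
  moreover have "finite (diag_rows ?c F)" "?c \<notin> diag_rows ?c F"
    by (simp_all add: diag_rows_def)
  ultimately show ?thesis
    by (simp add: diag_ones_def)
qed

definition upper_subsets :: "nat set \<Rightarrow> nat set set" where
  "upper_subsets D = {Y. Y \<subseteq> D \<and> (\<forall>i\<in>D. \<forall>i'\<in>Y. i' < i \<longrightarrow> i \<in> Y)}"

lemma upper_subsets_eq: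
  assumes "finite D"
  shows "upper_subsets D = insert {} ((\<lambda>t. {i \<in> D. t \<le> i}) ` D)"
proof (intro equalityI subsetI)
  fix Y
  assume Y: "Y \<in> upper_subsets D"
  show "Y \<in> insert {} ((\<lambda>t. {i \<in> D. t \<le> i}) ` D)"
  proof (cases "Y = {}")
    case False
    have "finite Y"
      using Y assms by (auto simp: upper_subsets_def intro: finite_subset)
    with False have min: "Min Y \<in> Y"
      by simp
    have "Y = {i \<in> D. Min Y \<le> i}"
    proof (intro equalityI subsetI)
      show "i \<in> {i \<in> D. Min Y \<le> i}" if "i \<in> Y" for i
        using that Y \<open>finite Y\<close> by (auto simp: upper_subsets_def)
      show "i \<in> Y" if "i \<in> {i \<in> D. Min Y \<le> i}" for i
        using that Y min by (cases "i = Min Y") (auto simp: upper_subsets_def le_less)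
    qed
    moreover have "Min Y \<in> D"
      using min Y by (auto simp: upper_subsets_def)
    ultimately show ?thesis
      by blast
  qed simp
qed (auto simp: upper_subsets_def)

lemma card_upper_subsets:
  assumes "finite D"
  shows "card (upper_subsets D) = card D + 1"
proof -
  let ?from = "\<lambda>t. {i \<in> D. t \<le> i}"
  have "inj_on ?from D"
  proof (rule inj_onI)
    fix s t
    assume "s \<in> D" "t \<in> D" "?from s = ?from t"
    then have "s \<in> ?from t" "t \<in> ?from s"
      by auto
    then show "s = t"
      by simp
  qed
  moreover have "{} \<notin> ?from ` D"
    by auto
  ultimately show ?thesis
    using assms by (simp add: upper_subsets_eq card_image)
qed

lemma admissible_cols_containing:
  assumes D: "D \<subseteq> {..<c}"
  shows "{X. admissible_col c D X \<and> c \<in> X} = insert c ` upper_subsets D"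
proof (intro equalityI subsetI)
  fix X
  assume "X \<in> {X. admissible_col c D X \<and> c \<in> X}"
  then have X: "X \<subseteq> {..c}" "\<forall>i\<in>X. i < c \<longrightarrow> i \<in> D" "\<forall>i\<in>D. \<forall>i'\<in>X. i' < i \<longrightarrow> i \<in> X" "c \<in> X"
    by (simp_all add: admissible_col_def)
  have "X - {c} \<subseteq> D"
    using X(1,2) by (force simp: subset_iff)
  moreover have "\<forall>i\<in>D. \<forall>i'\<in>X - {c}. i' < i \<longrightarrow> i \<in> X - {c}"
    using X(3) D by blast
  ultimately have "X - {c} \<in> upper_subsets D"
    by (simp add: upper_subsets_def)
  moreover have "X = insert c (X - {c})"
    using X(4) by blast
  ultimately show "X \<in> insert c ` upper_subsets D"
    by blast
next
  fix X
  assume "X \<in> insert c ` upper_subsets D"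
  then obtain Y where X: "X = insert c Y" and Y: "Y \<subseteq> D" "\<forall>i\<in>D. \<forall>i'\<in>Y. i' < i \<longrightarrow> i \<in> Y"
    by (auto simp: upper_subsets_def)
  have "\<forall>i\<in>D. \<forall>i'\<in>X. i' < i \<longrightarrow> i \<in> X"
    using X Y(2) D by fastforce
  moreover have "X \<subseteq> {..c}" "\<forall>i\<in>X. i < c \<longrightarrow> i \<in> D"
    using X Y(1) D by auto
  ultimately show "X \<in> {X. admissible_col c D X \<and> c \<in> X}"
    using X by (simp add: admissible_col_def)
qed

lemma admissible_cols_avoiding:
  assumes D: "D \<subseteq> {..<c}"
  shows "{X. admissible_col c D X \<and> c \<notin> X} = upper_subsets D - {{}}"
proof (intro equalityI subsetI)
  fix X
  assume "X \<in> {X. admissible_col c D X \<and> c \<notin> X}"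
  then have X: "X \<subseteq> {..c}" "X \<noteq> {}" "\<forall>i\<in>X. i < c \<longrightarrow> i \<in> D"
    "\<forall>i\<in>D. \<forall>i'\<in>X. i' < i \<longrightarrow> i \<in> X" "c \<notin> X"
    by (simp_all add: admissible_col_def)
  have "X \<subseteq> D"
    using X(1,3,5) by (force simp: subset_iff)
  with X(2,4) show "X \<in> upper_subsets D - {{}}"
    by (simp add: upper_subsets_def)
next
  fix X
  assume "X \<in> upper_subsets D - {{}}"
  then have X: "X \<subseteq> D" "X \<noteq> {}" "\<forall>i\<in>D. \<forall>i'\<in>X. i' < i \<longrightarrow> i \<in> X"
    by (simp_all add: upper_subsets_def)
  moreover have "X \<subseteq> {..c}" "c \<notin> X"
    using X(1) D by auto
  ultimately show "X \<in> {X. admissible_col c D X \<and> c \<notin> X}"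
    by (auto simp: admissible_col_def)
qed

lemma card_admissible_cols:
  assumes "D \<subseteq> {..<c}"
  shows "card {X. admissible_col c D X \<and> card D + (if c \<in> X then 1 else 0) = m}
     = (if m = card D + 1 then m else 0) + (if m = card D then m else 0)"
proof -
  have "finite D"
    using assms finite_subset by blast
  have "inj_on (insert c) (upper_subsets D)"
    using assms by (intro inj_onI) (auto simp: upper_subsets_def insert_ident)
  then have containing: "card {X. admissible_col c D X \<and> c \<in> X} = card D + 1"
    by (simp add: admissible_cols_containing[OF assms] card_image card_upper_subsets[OF \<open>finite D\<close>])
  have "{} \<in> upper_subsets D"
    by (simp add: upper_subsets_def)
  then have avoiding: "card {X. admissible_col c D X \<and> c \<notin> X} = card D"
    using \<open>finite D\<close> card_upper_subsets[OF \<open>finite D\<close>]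
    by (simp add: admissible_cols_avoiding[OF assms] upper_subsets_def)
  have finite_cols: "finite {X. admissible_col c D X \<and> P X}" for P
    by (rule finite_subset[of _ "Pow {..c}"]) (auto simp: admissible_col_def)
  have split: "{X. admissible_col c D X \<and> card D + (if c \<in> X then 1 else 0) = m}
     = (if m = card D + 1 then {X. admissible_col c D X \<and> c \<in> X} else {})
       \<union> (if m = card D then {X. admissible_col c D X \<and> c \<notin> X} else {})"
    by auto
  show ?thesis
    unfolding split by (subst card_Un_disjoint) (auto simp: containing avoiding finite_cols)
qed

lemma bij_betw_add_col:
  "bij_betw (\<lambda>(F, X). add_col (ncols u) F X)
     (SIGMA F:{F. is_typeB_tableau u F}. {X. admissible_col (ncols u) (diag_rows (ncols u) F) X})
     {H. is_typeB_tableau (False # u) H}"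
proof (rule bij_betw_byWitness[where f' = "\<lambda>H. (del_col (ncols u) H, col_rows (ncols u) H)"])
  let ?c = "ncols u"
  show "\<forall>p\<in>SIGMA F:{F. is_typeB_tableau u F}. {X. admissible_col ?c (diag_rows ?c F) X}.
          (\<lambda>H. (del_col ?c H, col_rows ?c H)) ((\<lambda>(F, X). add_col ?c F X) p) = p"
  proof
    fix p
    assume "p \<in> (SIGMA F:{F. is_typeB_tableau u F}. {X. admissible_col ?c (diag_rows ?c F) X})"
    then obtain F X where p: "p = (F, X)" and F: "is_typeB_tableau u F"
      by blast
    have not_new: "(i, j) \<in> F \<Longrightarrow> j \<noteq> ?c" for i j
      using typeB_tableau_col_less[OF F] by fastforce
    show "(\<lambda>H. (del_col ?c H, col_rows ?c H)) ((\<lambda>(F, X). add_col ?c F X) p) = p"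
      using del_col_add_col[OF not_new] col_rows_add_col[OF not_new] p by simp
  qed
  show "\<forall>H\<in>{H. is_typeB_tableau (False # u) H}. (\<lambda>(F, X). add_col ?c F X) (del_col ?c H, col_rows ?c H) = H"
    by (simp add: add_col_del_col)
  show "(\<lambda>(F, X). add_col ?c F X) ` (SIGMA F:{F. is_typeB_tableau u F}. {X. admissible_col ?c (diag_rows ?c F) X})
          \<subseteq> {H. is_typeB_tableau (False # u) H}"
    by (auto simp: typeB_add_col)
  show "(\<lambda>H. (del_col ?c H, col_rows ?c H)) ` {H. is_typeB_tableau (False # u) H}
          \<subseteq> (SIGMA F:{F. is_typeB_tableau u F}. {X. admissible_col ?c (diag_rows ?c F) X})"
    by (auto simp: typeB_del_col admissible_col_rows)
qed

lemma tab_count_Cons_west: "tab_count (False # u) m = m * tab_count u (m - 1) + m * tab_count u m"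
proof -
  let ?c = "ncols u"
  let ?A = "{F. is_typeB_tableau u F}"
  let ?B = "\<lambda>F. {X. admissible_col ?c (diag_rows ?c F) X
                     \<and> card (diag_rows ?c F) + (if ?c \<in> X then 1 else 0) = m}"
  have "bij_betw (\<lambda>(F, X). add_col ?c F X)
          {p \<in> SIGMA F:?A. {X. admissible_col ?c (diag_rows ?c F) X}.
             card (diag_rows ?c (fst p)) + (if ?c \<in> snd p then 1 else 0) = m}
          {H \<in> {H. is_typeB_tableau (False # u) H}. diag_ones (False # u) H = m}"
    by (rule bij_betw_Collect[OF bij_betw_add_col]) (auto simp: diag_ones_add_col)
  moreover have "{p \<in> SIGMA F:?A. {X. admissible_col ?c (diag_rows ?c F) X}.
             card (diag_rows ?c (fst p)) + (if ?c \<in> snd p then 1 else 0) = m} = Sigma ?A ?B"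
    by auto
  ultimately have "tab_count (False # u) m = card (Sigma ?A ?B)"
    by (simp add: tab_count_def bij_betw_same_card)
  also have "\<dots> = (\<Sum>F\<in>?A. card (?B F))"
    by (rule card_SigmaI) (auto simp: finite_typeB_tableaux_shape admissible_col_def
        intro: finite_subset[of _ "Pow {..?c}"])
  also have "\<dots> = (\<Sum>F\<in>?A. (if Suc (diag_ones u F) = m then m else 0)
                           + (if diag_ones u F = m then m else 0))"
  proof (rule sum.cong)
    fix F
    have "diag_rows ?c F \<subseteq> {..<?c}" "card (diag_rows ?c F) = diag_ones u F"
      by (auto simp: diag_rows_def diag_ones_def)
    then show "card (?B F) = (if Suc (diag_ones u F) = m then m else 0)
                             + (if diag_ones u F = m then m else 0)"
      by (subst card_admissible_cols) auto
  qed simp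
  also have "\<dots> = m * card {F \<in> ?A. Suc (diag_ones u F) = m} + m * card {F \<in> ?A. diag_ones u F = m}"
    by (simp add: sum.distrib sum.inter_filter[symmetric] finite_typeB_tableaux_shape)
  also have "\<dots> = m * tab_count u (m - 1) + m * tab_count u m"
    by (cases m) (simp_all add: tab_count_def)
  finally show ?thesis .
qed

section \<open>A corner\<close>

text \<open>The south step followed by the west step in \<open>u @ True # False # v\<close> form an outer corner:
  the cell \<open>(R, K)\<close> ends row \<open>R\<close> of the south step and is the bottom cell of column \<open>K\<close> of the
  west step. Removing that cell gives \<open>wWS\<close>; \<open>wS\<close> and \<open>wW\<close> arise by deleting its column
  (with the staircase row \<open>K\<close>) or its row.\<close>

locale corner =
  fixes u v :: "bool list"
begin

abbreviation "wSW \<equiv> u @ True # False # v"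
abbreviation "wWS \<equiv> u @ False # True # v"
abbreviation "wS \<equiv> u @ True # v"
abbreviation "wW \<equiv> u @ False # v"

definition K :: nat where "K = ncols v"
definition N :: nat where "N = ncols u + Suc K"
definition r :: nat where "r = length (rowlens u)"
definition R :: nat where "R = N + r"

lemma ncols_corner_words [simp]:
  "ncols wSW = N" "ncols wWS = N" "ncols wW = N" "ncols wS = N - 1"
  by (simp_all add: N_def K_def)

declare ncols_append [simp del] \<comment> \<open>keep \<open>ncols\<close> of the four words in terms of \<open>N\<close>\<close>

lemma K_less_N [simp]: "K < N"
  by (simp add: N_def)

lemma N_le_R [simp]: "N \<le> R"
  by (simp add: R_def)

lemma R_neq_K [simp]: "R \<noteq> K" "K \<noteq> R"
  using K_less_N N_le_R by linarith+

lemma row_len_SW: "row_len wSW d =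
    (if d < r then row_len u d + Suc K else if d = r then Suc K else row_len v (d - Suc r))"
  by (simp add: row_len_append row_len_Cons_south r_def K_def)

lemma row_len_WS: "row_len wWS d =
    (if d < r then row_len u d + Suc K else if d = r then K else row_len v (d - Suc r))"
  by (simp add: row_len_append row_len_Cons_south r_def K_def)

lemma row_len_S: "row_len wS d =
    (if d < r then row_len u d + K else if d = r then K else row_len v (d - Suc r))"
  by (simp add: row_len_append row_len_Cons_south r_def K_def)

lemma row_len_W: "row_len wW d = (if d < r then row_len u d + Suc K else row_len v (d - r))"
  by (simp add: row_len_append r_def K_def)

lemma mem_cells_corner_words:
  "(a, b) \<in> shifted_cells wSW \<longleftrightarrow> (a < N \<and> a \<le> b \<and> b < N) \<or> (N \<le> a \<and> b < row_len wSW (a - N))"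
  "(a, b) \<in> shifted_cells wWS \<longleftrightarrow> (a < N \<and> a \<le> b \<and> b < N) \<or> (N \<le> a \<and> b < row_len wWS (a - N))"
  "(a, b) \<in> shifted_cells wW \<longleftrightarrow> (a < N \<and> a \<le> b \<and> b < N) \<or> (N \<le> a \<and> b < row_len wW (a - N))"
  "(a, b) \<in> shifted_cells wS \<longleftrightarrow>
     (a < N - 1 \<and> a \<le> b \<and> b < N - 1) \<or> (N - 1 \<le> a \<and> b < row_len wS (a - (N - 1)))"
  by (simp_all only: mem_shifted_cells ncols_corner_words)

lemma less_row_len_v: "j < row_len v d \<Longrightarrow> j < K"
  using row_len_le_ncols[of v d] unfolding K_def by linarith


lemma shifted_cells_SW: "shifted_cells wSW = insert (R, K) (shifted_cells wWS)"
  by (auto simp: set_eq_iff mem_cells_corner_words row_len_SW row_len_WS R_def)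

lemma corner_notin_WS: "(R, K) \<notin> shifted_cells wWS"
  by (simp add: mem_cells_corner_words row_len_WS R_def)

lemma corner_in_SW: "(R, K) \<in> shifted_cells wSW"
  by (simp add: shifted_cells_SW)

lemma corner_col_le: "(a, K) \<in> shifted_cells wSW \<Longrightarrow> a \<le> R"
  by (auto simp: mem_cells_corner_words row_len_SW R_def not_less split: if_splits dest: less_row_len_v)

lemma corner_row_le: "(R, b) \<in> shifted_cells wSW \<Longrightarrow> b \<le> K"
  by (simp add: mem_cells_corner_words row_len_SW R_def)

lemma mem_cells_SW_skip_row: "(skip R i, b) \<in> shifted_cells wSW \<longleftrightarrow> (i, b) \<in> shifted_cells wW"
  using N_le_R by (auto simp: mem_cells_corner_words row_len_SW row_len_W R_def skip_def Suc_diff_le)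

lemma mem_cells_SW_skip_both:
  "(skip K i, skip K j) \<in> shifted_cells wSW \<longleftrightarrow> (i, j) \<in> shifted_cells wS"
  by (auto simp: mem_cells_corner_words row_len_SW row_len_S skip_def N_def not_less less_Suc_eq_le
      dest: less_row_len_v)


definition del_corner_row :: "(nat \<times> nat) set \<Rightarrow> (nat \<times> nat) set" where
  "del_corner_row H = {(i, j). (skip R i, j) \<in> H}"

definition ins_corner_row :: "(nat \<times> nat) set \<Rightarrow> (nat \<times> nat) set" where
  "ins_corner_row Y = (\<lambda>(i, j). (skip R i, j)) ` Y"

lemma mem_ins_corner_row: "(a, b) \<in> ins_corner_row Y \<longleftrightarrow> (\<exists>i. a = skip R i \<and> (i, b) \<in> Y)"
  by (auto simp: ins_corner_row_def)

lemma mem_ins_corner_row_below: "a < R \<Longrightarrow> (a, b) \<in> ins_corner_row Y \<longleftrightarrow> (a, b) \<in> Y"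
  by (auto simp: mem_ins_corner_row skip_eq_below)

lemma corner_row_empty:
  assumes H: "is_typeB_tableau wSW H" and "(R, K) \<notin> H"
  shows "(R, b) \<notin> H"
proof
  assume Rb: "(R, b) \<in> H"
  then have "(R, b) \<in> shifted_cells wSW"
    using is_typeB_tableauD(1)[OF H] by blast
  with Rb \<open>(R, K) \<notin> H\<close> have "b < K"
    using corner_row_le le_neq_implies_less by blast
  obtain i where i: "(i, K) \<in> H"
    using is_typeB_tableauD(2)[OF H, of K] by auto
  then have "i < R"
    using assms corner_col_le is_typeB_tableauD(1)[OF H] le_neq_implies_less by blast
  show False
    using is_typeB_tableauD(3)[OF H corner_in_SW \<open>(R, K) \<notin> H\<close> \<open>i < R\<close> i \<open>b < K\<close> Rb] .
qed

lemma typeB_del_corner_row: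
  assumes H: "is_typeB_tableau wSW H" and "(R, K) \<notin> H"
  shows "is_typeB_tableau wW (del_corner_row H)"
proof (rule is_typeB_tableauI)
  have row_old: "\<exists>i. a = skip R i" if "(a, b) \<in> H" for a b
    using that corner_row_empty[OF assms] ex_skip_eq by metis
  show "del_corner_row H \<subseteq> shifted_cells wW"
    using is_typeB_tableauD(1)[OF H] by (auto simp: del_corner_row_def simp flip: mem_cells_SW_skip_row)
  show "\<exists>i. (i, j) \<in> del_corner_row H" if j: "j < ncols wW" for j
  proof -
    obtain a where "(a, j) \<in> H"
      using j is_typeB_tableauD(2)[OF H, of j] by auto
    with row_old[of a j] show ?thesis
      by (auto simp: del_corner_row_def)
  qed
  show False if "(i, j) \<in> shifted_cells wW" "(i, j) \<notin> del_corner_row H"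
    and "i' < i" "(i', j) \<in> del_corner_row H" "j' < j" "(i, j') \<in> del_corner_row H" for i j i' j'
    using that is_typeB_tableauD(3)[OF H, of "skip R i" j "skip R i'" j']
    by (simp add: del_corner_row_def mem_cells_SW_skip_row)
  show "(i, j) \<notin> del_corner_row H" if "i < ncols wW" "(i, i) \<notin> del_corner_row H" for i j
    using that is_typeB_tableauD(4)[OF H, of i j] less_le_trans[OF _ N_le_R]
    by (simp add: del_corner_row_def)
qed

lemma typeB_ins_corner_row:
  assumes Y: "is_typeB_tableau wW Y"
  shows "is_typeB_tableau wSW (ins_corner_row Y)"
proof (rule is_typeB_tableauI)
  show "ins_corner_row Y \<subseteq> shifted_cells wSW"
    using is_typeB_tableauD(1)[OF Y] by (auto simp: ins_corner_row_def mem_cells_SW_skip_row)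
  show "\<exists>i. (i, j) \<in> ins_corner_row Y" if "j < ncols wSW" for j
    using that is_typeB_tableauD(2)[OF Y, of j] by (auto simp: mem_ins_corner_row)
  show False if ab: "(a, b) \<in> shifted_cells wSW" "(a, b) \<notin> ins_corner_row Y"
    and i': "i' < a" "(i', b) \<in> ins_corner_row Y" and j': "j' < b" "(a, j') \<in> ins_corner_row Y"
  for a b i' j'
  proof -
    obtain i x where "a = skip R i" "(i, j') \<in> Y" "i' = skip R x" "(x, b) \<in> Y"
      using i'(2) j'(2) by (auto simp: mem_ins_corner_row)
    with that show False
      using is_typeB_tableauD(3)[OF Y, of i b x j'] by (auto simp: mem_cells_SW_skip_row mem_ins_corner_row)
  qed
  show "(i, j) \<notin> ins_corner_row Y" if "i < ncols wSW" "(i, i) \<notin> ins_corner_row Y" for i j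
  proof -
    have "i < R"
      using that(1) less_le_trans[OF _ N_le_R] by simp
    with that show ?thesis
      using is_typeB_tableauD(4)[OF Y, of i j] by (simp add: mem_ins_corner_row_below)
  qed
qed

lemma del_ins_corner_row: "del_corner_row (ins_corner_row Y) = Y"
  by (auto simp: del_corner_row_def ins_corner_row_def)

lemma ins_del_corner_row:
  assumes "is_typeB_tableau wSW H" "(R, K) \<notin> H"
  shows "ins_corner_row (del_corner_row H) = H"
proof -
  have "(a, b) \<in> ins_corner_row (del_corner_row H) \<longleftrightarrow> (a, b) \<in> H" for a b
    using corner_row_empty[OF assms, of b] ex_skip_eq[of a R]
    by (auto simp: mem_ins_corner_row del_corner_row_def)
  then show ?thesis
    by auto
qed

lemma diag_ones_ins_corner_row: "diag_ones wSW (ins_corner_row Y) = diag_ones wW Y"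
proof -
  have "{i. i < N \<and> (i, i) \<in> ins_corner_row Y} = {i. i < N \<and> (i, i) \<in> Y}"
    using less_le_trans[OF _ N_le_R] by (auto simp: mem_ins_corner_row_below)
  then show ?thesis
    by (simp add: diag_ones_def)
qed

lemma card_corner_zero:
  "card {H. is_typeB_tableau wSW H \<and> diag_ones wSW H = m \<and> (R, K) \<notin> H} = tab_count wW m"
  unfolding tab_count_def
proof (rule bij_betw_same_card[OF bij_betw_byWitness[where f' = ins_corner_row]])
  show "\<forall>H\<in>{H. is_typeB_tableau wSW H \<and> diag_ones wSW H = m \<and> (R, K) \<notin> H}.
          ins_corner_row (del_corner_row H) = H"
    using ins_del_corner_row by blast
  show "\<forall>Y\<in>{Y. is_typeB_tableau wW Y \<and> diag_ones wW Y = m}. del_corner_row (ins_corner_row Y) = Y"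
    by (simp add: del_ins_corner_row)
  show "del_corner_row ` {H. is_typeB_tableau wSW H \<and> diag_ones wSW H = m \<and> (R, K) \<notin> H}
          \<subseteq> {Y. is_typeB_tableau wW Y \<and> diag_ones wW Y = m}"
  proof clarify
    fix H
    assume "is_typeB_tableau wSW H" "(R, K) \<notin> H"
    then show "is_typeB_tableau wW (del_corner_row H) \<and> diag_ones wW (del_corner_row H) = diag_ones wSW H"
      using diag_ones_ins_corner_row[of "del_corner_row H"] ins_del_corner_row[of H]
      by (simp add: typeB_del_corner_row)
  qed
  show "ins_corner_row ` {Y. is_typeB_tableau wW Y \<and> diag_ones wW Y = m}
          \<subseteq> {H. is_typeB_tableau wSW H \<and> diag_ones wSW H = m \<and> (R, K) \<notin> H}"
  proof clarify
    fix Y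
    assume "is_typeB_tableau wW Y"
    then show "is_typeB_tableau wSW (ins_corner_row Y) \<and> diag_ones wSW (ins_corner_row Y) = diag_ones wW Y
        \<and> (R, K) \<notin> ins_corner_row Y"
      by (simp add: typeB_ins_corner_row diag_ones_ins_corner_row mem_ins_corner_row)
  qed
qed

definition del_corner_col :: "(nat \<times> nat) set \<Rightarrow> (nat \<times> nat) set" where
  "del_corner_col H = {(i, j). (skip K i, skip K j) \<in> H}"

definition ins_corner_col :: "(nat \<times> nat) set \<Rightarrow> (nat \<times> nat) set" where
  "ins_corner_col Y = insert (R, K) ((\<lambda>(i, j). (skip K i, skip K j)) ` Y)"

lemma mem_ins_corner_col:
  "(a, b) \<in> ins_corner_col Y \<longleftrightarrow> (a, b) = (R, K) \<or> (\<exists>i j. a = skip K i \<and> b = skip K j \<and> (i, j) \<in> Y)"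
  by (auto simp: ins_corner_col_def)

lemma skip_K_less_N_iff: "skip K i < N \<longleftrightarrow> i < N - 1"
  using K_less_N by (auto simp: skip_def simp del: K_less_N)

lemma corner_diag_row_empty:
  assumes H: "is_typeB_tableau wSW H" and "col_rows K H = {R}"
  shows "(K, j) \<notin> H"
proof -
  have "K \<notin> col_rows K H"
    using assms(2) by simp
  then have "(K, K) \<notin> H"
    by (simp add: col_rows_def)
  then show ?thesis
    using is_typeB_tableauD(4)[OF H, of K j] by simp
qed

lemma typeB_del_corner_col:
  assumes H: "is_typeB_tableau wSW H" and alone: "col_rows K H = {R}"
  shows "is_typeB_tableau wS (del_corner_col H)"
proof (rule is_typeB_tableauI)
  show "del_corner_col H \<subseteq> shifted_cells wS"
    using is_typeB_tableauD(1)[OF H] by (auto simp: del_corner_col_def simp flip: mem_cells_SW_skip_both)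
  show "\<exists>i. (i, j) \<in> del_corner_col H" if j: "j < ncols wS" for j
  proof -
    obtain a where a: "(a, skip K j) \<in> H"
      using j is_typeB_tableauD(2)[OF H, of "skip K j"] by (auto simp: skip_K_less_N_iff)
    then have "a \<noteq> K"
      using corner_diag_row_empty[OF assms] by blast
    with a show ?thesis
      using ex_skip_eq[of a K] by (auto simp: del_corner_col_def)
  qed
  show False if "(i, j) \<in> shifted_cells wS" "(i, j) \<notin> del_corner_col H"
    and "i' < i" "(i', j) \<in> del_corner_col H" "j' < j" "(i, j') \<in> del_corner_col H" for i j i' j'
    using that is_typeB_tableauD(3)[OF H, of "skip K i" "skip K j" "skip K i'" "skip K j'"]
    by (simp add: del_corner_col_def mem_cells_SW_skip_both)
  show "(i, j) \<notin> del_corner_col H" if "i < ncols wS" "(i, i) \<notin> del_corner_col H" for i j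
    using that is_typeB_tableauD(4)[OF H, of "skip K i" "skip K j"]
    by (simp add: del_corner_col_def skip_K_less_N_iff)
qed

lemma ins_corner_col_hook_free:
  assumes Y: "is_typeB_tableau wS Y"
    and ab: "(a, b) \<in> shifted_cells wSW" "(a, b) \<notin> ins_corner_col Y"
    and i': "i' < a" "(i', b) \<in> ins_corner_col Y"
    and j': "j' < b" "(a, j') \<in> ins_corner_col Y"
  shows False
proof (cases "b = K")
  case True
  with i' have "i' = R"
    by (auto simp: mem_ins_corner_col)
  with ab(1) i'(1) True show False
    using corner_col_le by fastforce
next
  case False
  have "(a, j') \<noteq> (R, K)"
    using ab(1) j'(1) corner_row_le by fastforce
  with j' obtain i j0 where a: "a = skip K i" "j' = skip K j0" "(i, j0) \<in> Y"
    by (auto simp: mem_ins_corner_col)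
  from i' False obtain x j where b: "i' = skip K x" "b = skip K j" "(x, j) \<in> Y"
    by (auto simp: mem_ins_corner_col)
  show False
    using is_typeB_tableauD(3)[OF Y, of i j x j0] ab i'(1) j'(1) a b
    by (auto simp: mem_cells_SW_skip_both mem_ins_corner_col)
qed

lemma typeB_ins_corner_col:
  assumes Y: "is_typeB_tableau wS Y"
  shows "is_typeB_tableau wSW (ins_corner_col Y)"
proof (rule is_typeB_tableauI)
  show "ins_corner_col Y \<subseteq> shifted_cells wSW"
    using is_typeB_tableauD(1)[OF Y] corner_in_SW
    by (auto simp: ins_corner_col_def mem_cells_SW_skip_both)
  show "\<exists>i. (i, j) \<in> ins_corner_col Y" if j: "j < ncols wSW" for j
  proof (cases "j = K")
    case False
    then obtain j0 where j0: "j = skip K j0"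
      using ex_skip_eq by blast
    with j obtain i where "(i, j0) \<in> Y"
      using is_typeB_tableauD(2)[OF Y, of j0] by (auto simp: skip_K_less_N_iff)
    with j0 show ?thesis
      by (auto simp: mem_ins_corner_col)
  qed (auto simp: ins_corner_col_def)
  show False if "(a, b) \<in> shifted_cells wSW" "(a, b) \<notin> ins_corner_col Y"
    and "i' < a" "(i', b) \<in> ins_corner_col Y" "j' < b" "(a, j') \<in> ins_corner_col Y" for a b i' j'
    using ins_corner_col_hook_free[OF Y that] .
  show "(i, j) \<notin> ins_corner_col Y" if "i < ncols wSW" "(i, i) \<notin> ins_corner_col Y" for i j
  proof (cases "i = K")
    case False
    then obtain i0 where i0: "i = skip K i0"
      using ex_skip_eq by blast
    with that have "i0 < ncols wS" "(i0, i0) \<notin> Y"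
      by (auto simp: skip_K_less_N_iff mem_ins_corner_col)
    then have "(i0, j0) \<notin> Y" for j0
      using is_typeB_tableauD(4)[OF Y] by blast
    moreover have "i \<noteq> R"
      using that(1) N_le_R by (simp del: N_le_R)
    ultimately show ?thesis
      using i0 by (auto simp: mem_ins_corner_col)
  qed (auto simp: mem_ins_corner_col)
qed

lemma col_rows_ins_corner_col: "col_rows K (ins_corner_col Y) = {R}"
  by (auto simp: col_rows_def mem_ins_corner_col)

lemma del_ins_corner_col: "del_corner_col (ins_corner_col Y) = Y"
  by (auto simp: del_corner_col_def mem_ins_corner_col)

lemma ins_del_corner_col:
  assumes "is_typeB_tableau wSW H" and alone: "col_rows K H = {R}"
  shows "ins_corner_col (del_corner_col H) = H"
proof -
  have "(a, b) \<in> ins_corner_col (del_corner_col H) \<longleftrightarrow> (a, b) \<in> H" for a b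
  proof (cases "(a, b) = (R, K)")
    case False
    have "(a, b) \<in> H \<Longrightarrow> a \<noteq> K \<and> b \<noteq> K"
      using False corner_diag_row_empty[OF assms, of b] alone by (auto simp: col_rows_def)
    then show ?thesis
      using ex_skip_eq[of a K] ex_skip_eq[of b K] False
      by (auto simp: mem_ins_corner_col del_corner_col_def)
  qed (use alone in \<open>auto simp: col_rows_def ins_corner_col_def\<close>)
  then show ?thesis
    by auto
qed

lemma diag_ones_ins_corner_col: "diag_ones wSW (ins_corner_col Y) = diag_ones wS Y"
proof -
  have "{i. i < N \<and> (i, i) \<in> ins_corner_col Y} = skip K ` {i. i < N - 1 \<and> (i, i) \<in> Y}"
    using N_le_R by (auto simp: mem_ins_corner_col skip_K_less_N_iff image_iff)
  moreover have "inj_on (skip K) A" for A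
    by (simp add: inj_on_def)
  ultimately show ?thesis
    by (simp add: diag_ones_def card_image)
qed

lemma card_corner_alone:
  "card {H. is_typeB_tableau wSW H \<and> diag_ones wSW H = m \<and> col_rows K H = {R}} = tab_count wS m"
  unfolding tab_count_def
proof (rule bij_betw_same_card[OF bij_betw_byWitness[where f' = ins_corner_col]])
  show "\<forall>H\<in>{H. is_typeB_tableau wSW H \<and> diag_ones wSW H = m \<and> col_rows K H = {R}}.
          ins_corner_col (del_corner_col H) = H"
    using ins_del_corner_col by blast
  show "\<forall>Y\<in>{Y. is_typeB_tableau wS Y \<and> diag_ones wS Y = m}. del_corner_col (ins_corner_col Y) = Y"
    by (simp add: del_ins_corner_col)
  show "del_corner_col ` {H. is_typeB_tableau wSW H \<and> diag_ones wSW H = m \<and> col_rows K H = {R}}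
          \<subseteq> {Y. is_typeB_tableau wS Y \<and> diag_ones wS Y = m}"
  proof clarify
    fix H
    assume "is_typeB_tableau wSW H" "col_rows K H = {R}"
    then show "is_typeB_tableau wS (del_corner_col H) \<and> diag_ones wS (del_corner_col H) = diag_ones wSW H"
      using diag_ones_ins_corner_col[of "del_corner_col H"] ins_del_corner_col[of H]
      by (simp add: typeB_del_corner_col)
  qed
  show "ins_corner_col ` {Y. is_typeB_tableau wS Y \<and> diag_ones wS Y = m}
          \<subseteq> {H. is_typeB_tableau wSW H \<and> diag_ones wSW H = m \<and> col_rows K H = {R}}"
  proof clarify
    fix Y
    assume "is_typeB_tableau wS Y"
    then show "is_typeB_tableau wSW (ins_corner_col Y) \<and> diag_ones wSW (ins_corner_col Y) = diag_ones wS Y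
        \<and> col_rows K (ins_corner_col Y) = {R}"
      by (simp add: typeB_ins_corner_col diag_ones_ins_corner_col col_rows_ins_corner_col)
  qed
qed

lemma typeB_remove_corner:
  assumes H: "is_typeB_tableau wSW H" and "(R, K) \<in> H" "col_rows K H \<noteq> {R}"
  shows "is_typeB_tableau wWS (H - {(R, K)})"
proof (rule is_typeB_tableauI)
  obtain i0 where i0: "(i0, K) \<in> H" "i0 \<noteq> R"
    using assms(2,3) by (auto simp: col_rows_def)
  show "H - {(R, K)} \<subseteq> shifted_cells wWS"
    using is_typeB_tableauD(1)[OF H] shifted_cells_SW by auto
  show "\<exists>i. (i, j) \<in> H - {(R, K)}" if "j < ncols wWS" for j
    using that i0 is_typeB_tableauD(2)[OF H, of j] by (cases "j = K") auto
  show False if "(i, j) \<in> shifted_cells wWS" "(i, j) \<notin> H - {(R, K)}"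
    and "i' < i" "(i', j) \<in> H - {(R, K)}" "j' < j" "(i, j') \<in> H - {(R, K)}" for i j i' j'
    using that corner_notin_WS is_typeB_tableauD(3)[OF H, of i j i' j'] shifted_cells_SW by auto
  show "(i, j) \<notin> H - {(R, K)}" if "i < ncols wWS" "(i, i) \<notin> H - {(R, K)}" for i j
    using that is_typeB_tableauD(4)[OF H, of i j] N_le_R by (auto simp del: N_le_R)
qed

lemma typeB_insert_corner:
  assumes Y: "is_typeB_tableau wWS Y"
  shows "is_typeB_tableau wSW (insert (R, K) Y)"
proof (rule is_typeB_tableauI)
  show "insert (R, K) Y \<subseteq> shifted_cells wSW"
    using is_typeB_tableauD(1)[OF Y] shifted_cells_SW by auto
  show "\<exists>i. (i, j) \<in> insert (R, K) Y" if "j < ncols wSW" for j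
    using that is_typeB_tableauD(2)[OF Y, of j] by auto
  show False if ab: "(a, b) \<in> shifted_cells wSW" "(a, b) \<notin> insert (R, K) Y"
    and i': "i' < a" "(i', b) \<in> insert (R, K) Y" and j': "j' < b" "(a, j') \<in> insert (R, K) Y"
  for a b i' j'
  proof -
    have "(i', b) \<in> Y"
      using ab(1) i' corner_col_le by fastforce
    moreover have "(a, j') \<in> Y"
      using ab(1) j' corner_row_le by fastforce
    moreover have "(a, b) \<in> shifted_cells wWS"
      using ab shifted_cells_SW by auto
    ultimately show False
      using is_typeB_tableauD(3)[OF Y] ab(2) i'(1) j'(1) by blast
  qed
  show "(i, j) \<notin> insert (R, K) Y" if "i < ncols wSW" "(i, i) \<notin> insert (R, K) Y" for i j
    using that is_typeB_tableauD(4)[OF Y, of i j] N_le_R by (auto simp del: N_le_R)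
qed

lemma col_rows_insert_corner:
  assumes Y: "is_typeB_tableau wWS Y"
  shows "col_rows K (insert (R, K) Y) \<noteq> {R}"
proof -
  obtain i where "(i, K) \<in> Y"
    using is_typeB_tableauD(2)[OF Y, of K] by auto
  moreover from this have "i \<noteq> R"
    using is_typeB_tableauD(1)[OF Y] corner_notin_WS by blast
  ultimately show ?thesis
    by (auto simp: col_rows_def)
qed

lemma diag_ones_remove_corner: "diag_ones wWS (H - {(R, K)}) = diag_ones wSW H"
  unfolding diag_ones_def by (rule arg_cong[where f = card]) auto

lemma card_corner_shared:
  "card {H. is_typeB_tableau wSW H \<and> diag_ones wSW H = m \<and> (R, K) \<in> H \<and> col_rows K H \<noteq> {R}}
     = tab_count wWS m"
  unfolding tab_count_def
proof (rule bij_betw_same_card[OF bij_betw_byWitness[where f' = "insert (R, K)"]])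
  show "\<forall>H\<in>{H. is_typeB_tableau wSW H \<and> diag_ones wSW H = m \<and> (R, K) \<in> H \<and> col_rows K H \<noteq> {R}}.
          insert (R, K) (H - {(R, K)}) = H"
    by blast
  show "\<forall>Y\<in>{Y. is_typeB_tableau wWS Y \<and> diag_ones wWS Y = m}. insert (R, K) Y - {(R, K)} = Y"
    using is_typeB_tableauD(1) corner_notin_WS by blast
  show "(\<lambda>H. H - {(R, K)}) `
          {H. is_typeB_tableau wSW H \<and> diag_ones wSW H = m \<and> (R, K) \<in> H \<and> col_rows K H \<noteq> {R}}
          \<subseteq> {Y. is_typeB_tableau wWS Y \<and> diag_ones wWS Y = m}"
  proof (rule image_subsetI)
    fix H
    assume "H \<in> {H. is_typeB_tableau wSW H \<and> diag_ones wSW H = m \<and> (R, K) \<in> H \<and> col_rows K H \<noteq> {R}}"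
    then show "H - {(R, K)} \<in> {Y. is_typeB_tableau wWS Y \<and> diag_ones wWS Y = m}"
      by (simp add: typeB_remove_corner diag_ones_remove_corner)
  qed
  show "insert (R, K) ` {Y. is_typeB_tableau wWS Y \<and> diag_ones wWS Y = m}
          \<subseteq> {H. is_typeB_tableau wSW H \<and> diag_ones wSW H = m \<and> (R, K) \<in> H \<and> col_rows K H \<noteq> {R}}"
  proof clarify
    fix Y
    assume Y: "is_typeB_tableau wWS Y"
    moreover have "(R, K) \<notin> Y"
      using is_typeB_tableauD(1)[OF Y] corner_notin_WS by blast
    ultimately show "is_typeB_tableau wSW (insert (R, K) Y) \<and> diag_ones wSW (insert (R, K) Y) = diag_ones wWS Y
        \<and> (R, K) \<in> insert (R, K) Y \<and> col_rows K (insert (R, K) Y) \<noteq> {R}"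
      using diag_ones_remove_corner[of "insert (R, K) Y"]
      by (simp add: typeB_insert_corner col_rows_insert_corner)
  qed
qed

lemma tab_count_corner: "tab_count wSW m = tab_count wWS m + tab_count wS m + tab_count wW m"
proof -
  let ?T = "{H. is_typeB_tableau wSW H \<and> diag_ones wSW H = m}"
  let ?shared = "{H \<in> ?T. (R, K) \<in> H \<and> col_rows K H \<noteq> {R}}"
  let ?alone = "{H \<in> ?T. col_rows K H = {R}}"
  let ?zero = "{H \<in> ?T. (R, K) \<notin> H}"
  have alone_mem: "col_rows K H = {R} \<Longrightarrow> (R, K) \<in> H" for H
    by (metis col_rows_def mem_Collect_eq singletonI)
  have "?T = (?shared \<union> ?alone) \<union> ?zero"
    using alone_mem by blast
  moreover have "finite ?T"
    using finite_typeB_tableaux_shape by (rule finite_subset[rotated]) blast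
  moreover have "?shared \<inter> ?alone = {}" "(?shared \<union> ?alone) \<inter> ?zero = {}"
    using alone_mem by blast+
  ultimately have "card ?T = card ?shared + card ?alone + card ?zero"
    by (metis (no_types, lifting) card_Un_disjoint finite_Un)
  also have "\<dots> = tab_count wWS m + tab_count wS m + tab_count wW m"
    using card_corner_shared card_corner_alone card_corner_zero by (simp add: conj_assoc)
  finally show ?thesis
    by (simp add: tab_count_def)
qed

end

lemma tab_count_corner:
  "tab_count (u @ True # False # v) m
     = tab_count (u @ False # True # v) m + tab_count (u @ True # v) m + tab_count (u @ False # v) m"
  by (rule corner.tab_count_corner)

section \<open>Continuations of a prefix\<close>

lemma finite_lists_length: "finite {x :: bool list. length x = b}"
  using finite_lists_length_eq[of "UNIV :: bool set" b] by simp

lemma sum_lists_length_Suc: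
  "(\<Sum>x | length x = Suc b. f x) = (\<Sum>x | length x = b. f (True # x)) + (\<Sum>x | length x = b. f (False # x))"
proof -
  let ?L = "{x :: bool list. length x = b}"
  have "{x :: bool list. length x = Suc b} = Cons True ` ?L \<union> Cons False ` ?L"
    by (auto simp: length_Suc_conv image_iff)
  moreover have "sum f (Cons True ` ?L \<union> Cons False ` ?L) = sum f (Cons True ` ?L) + sum f (Cons False ` ?L)"
    by (rule sum.union_disjoint) (auto simp: finite_lists_length)
  ultimately show ?thesis
    by (simp add: sum.reindex)
qed

lemma sum_words_split:
  "(\<Sum>w | length w = a + length p + b \<and> take (length p) (drop a w) = p. f w)
     = (\<Sum>u | length u = a. \<Sum>x | length x = b. f (u @ p @ x))"
proof -
  let ?join = "\<lambda>(u, x). u @ p @ x"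
  have "{w. length w = a + length p + b \<and> take (length p) (drop a w) = p}
      = ?join ` ({u. length u = a} \<times> {x. length x = b})"
  proof (intro equalityI subsetI)
    fix w
    assume w: "w \<in> {w. length w = a + length p + b \<and> take (length p) (drop a w) = p}"
    define x where "x = drop (length p) (drop a w)"
    have "drop a w = p @ x"
      using append_take_drop_id[of "length p" "drop a w"] w by (simp add: x_def)
    then have "w = take a w @ p @ x"
      using append_take_drop_id[of a w] by simp
    moreover have "length (take a w) = a" "length x = b"
      using w by (simp_all add: x_def)
    ultimately show "w \<in> ?join ` ({u. length u = a} \<times> {x. length x = b})"
      by (intro image_eqI[of _ _ "(take a w, x)"]) auto
  qed auto
  moreover have "inj_on ?join ({u. length u = a} \<times> {x. length x = b})"
    by (auto simp: inj_on_def)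
  ultimately have "(\<Sum>w | length w = a + length p + b \<and> take (length p) (drop a w) = p. f w)
      = (\<Sum>(u, x) \<in> {u. length u = a} \<times> {x. length x = b}. f (u @ p @ x))"
    by (simp add: sum.reindex case_prod_beta')
  also have "\<dots> = (\<Sum>u | length u = a. \<Sum>x | length x = b. f (u @ p @ x))"
    by (rule sum.cartesian_product[symmetric])
  finally show ?thesis .
qed

definition ext_count :: "bool list \<Rightarrow> nat \<Rightarrow> nat \<Rightarrow> nat" where
  "ext_count u b m = (\<Sum>x | length x = b. tab_count (u @ x) m)"

lemma ext_count_0: "ext_count u 0 m = tab_count u m"
  by (simp add: ext_count_def)

lemma ext_count_Suc: "ext_count u (Suc b) m = ext_count (u @ [True]) b m + ext_count (u @ [False]) b m"
  by (simp add: ext_count_def sum_lists_length_Suc)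

lemma ext_count_add: "ext_count v (a + b) m = (\<Sum>u | length u = a. ext_count (v @ u) b m)"
proof (induction a arbitrary: v)
  case 0
  then show ?case
    by simp
next
  case (Suc a)
  then show ?case
    by (simp add: ext_count_Suc sum_lists_length_Suc)
qed

lemma ext_count_corner:
  "ext_count (u @ True # False # v) b m
     = ext_count (u @ False # True # v) b m + ext_count (u @ True # v) b m + ext_count (u @ False # v) b m"
  by (simp add: ext_count_def tab_count_corner sum.distrib)

lemma ext_count_Cons_west:
  "ext_count (False # u) b m = m * ext_count u b (m - 1) + m * ext_count u b m"
  by (simp add: ext_count_def tab_count_Cons_west sum.distrib sum_distrib_left)

lemma ext_count_snoc_south: "ext_count (u @ [True]) b m = Suc b * ext_count u b m"
proof (induction b arbitrary: u)
  case 0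
  then show ?case
    by (simp add: ext_count_0 tab_count_snoc_south)
next
  case (Suc b)
  have "ext_count (u @ [True]) (Suc b) m = ext_count (u @ [True, True]) b m + ext_count (u @ [True, False]) b m"
    by (simp add: ext_count_Suc)
  also have "\<dots> = ext_count (u @ [True, True]) b m + ext_count (u @ [False, True]) b m
      + ext_count (u @ [True]) b m + ext_count (u @ [False]) b m"
    using ext_count_corner[of u "[]" b m] by simp
  also have "\<dots> = Suc (Suc b) * ext_count u (Suc b) m"
    using Suc.IH[of "u @ [True]"] Suc.IH[of "u @ [False]"] by (simp add: ext_count_Suc algebra_simps)
  finally show ?case .
qed

lemma ext_count_Nil: "ext_count [] b m = fact b * (b choose m)"
proof (induction b arbitrary: m)
  case 0
  then show ?case
    by (simp add: ext_count_0 tab_count_Nil)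
next
  case (Suc b)
  have "ext_count [] (Suc b) m = Suc b * ext_count [] b m + (m * ext_count [] b (m - 1) + m * ext_count [] b m)"
    using ext_count_Suc[of "[]" b m] ext_count_snoc_south[of "[]" b m] ext_count_Cons_west[of "[]" b m]
    by simp
  also have "\<dots> = fact b * (Suc b * (b choose m) + m * (b choose (m - 1)) + m * (b choose m))"
    by (simp add: Suc.IH algebra_simps)
  also have "Suc b * (b choose m) + m * (b choose (m - 1)) + m * (b choose m) = Suc b * (Suc b choose m)"
  proof (cases m)
    case (Suc m')
    have "(Suc b - m) * (Suc b choose m) = Suc b * (b choose m)"
      using binomial_absorb_comp[of "Suc b" m] by simp
    moreover have "m * (b choose (m - 1)) + m * (b choose m) = m * (Suc b choose m)"
      using Suc by (simp add: add_mult_distrib2)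
    moreover have "(Suc b - m) * (Suc b choose m) + m * (Suc b choose m) = Suc b * (Suc b choose m)"
      by (cases "m \<le> Suc b") (simp_all add: add_mult_distrib[symmetric] binomial_eq_0)
    ultimately show ?thesis
      by linarith
  qed simp
  finally show ?case
    by (simp add: algebra_simps)
qed

lemma ext_count_Suc_snoc_west:
  "ext_count u (Suc b) m = Suc b * ext_count u b m + ext_count (u @ [False]) b m"
  by (simp add: ext_count_Suc ext_count_snoc_south)

lemma ext_count_snoc_west_west:
  "real (ext_count (u @ [False, False]) b m)
     = real (ext_count u (b + 2) m) - (2 * real b + 3) * real (ext_count u (b + 1) m)
       + (real b + 1) ^ 2 * real (ext_count u b m)"
  using ext_count_Suc_snoc_west[of "u @ [False]" b m] ext_count_Suc_snoc_west[of u "Suc b" m]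
    ext_count_Suc_snoc_west[of u b m]
  by (simp add: algebra_simps power2_eq_square)

lemma sum_ext_count:
  assumes "a + j \<le> n"
  shows "(\<Sum>m\<le>n. \<Sum>u | length u = a. ext_count u j m) = fact (a + j) * 2 ^ (a + j)"
proof -
  have "(\<Sum>u | length u = a. ext_count u j m) = fact (a + j) * (a + j choose m)" for m
    using ext_count_add[of "[]" a j m] by (simp add: ext_count_Nil)
  then have "(\<Sum>m\<le>n. \<Sum>u | length u = a. ext_count u j m) = (\<Sum>m\<le>n. fact (a + j) * (a + j choose m))"
    by simp
  also have "\<dots> = fact (a + j) * (\<Sum>m\<le>a + j. a + j choose m)"
    using assms by (simp add: sum_distrib_left[symmetric] sum.mono_neutral_right)
  finally show ?thesis
    by (simp add: choose_row_sum)
qed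

lemma card_typeB_tableaux_words:
  "card {t \<in> typeB_tableaux n. P (fst t)} = (\<Sum>w | length w = n \<and> P w. card {F. is_typeB_tableau w F})"
proof -
  have "{t \<in> typeB_tableaux n. P (fst t)} = Sigma {w. length w = n \<and> P w} (\<lambda>w. {F. is_typeB_tableau w F})"
    by (auto simp: typeB_tableaux_def)
  moreover have "finite {w :: bool list. length w = n \<and> P w}"
    by (rule finite_subset[OF _ finite_lists_length[of n]]) auto
  ultimately show ?thesis
    by (simp add: card_SigmaI finite_typeB_tableaux_shape)
qed

lemma card_typeB_tableaux: "card (typeB_tableaux n) = fact n * 2 ^ n"
proof -
  have "card (typeB_tableaux n) = (\<Sum>w | length w = n. \<Sum>m\<le>n. tab_count w m)"
    using card_typeB_tableaux_words[of n "\<lambda>_. True"] by (simp add: card_typeB_tableaux_shape)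
  also have "\<dots> = (\<Sum>m\<le>n. \<Sum>w | length w = n. ext_count w 0 m)"
    by (simp add: sum.swap[of _ "{..n}"] ext_count_0)
  finally show ?thesis
    using sum_ext_count[of n 0 n] by simp
qed

lemma take_two_drop: "Suc i < length w \<Longrightarrow> take 2 (drop i w) = [w ! i, w ! Suc i]"
  by (simp add: numeral_2_eq_2 Cons_nth_drop_Suc[symmetric] take_Suc_conv_app_nth)

lemma words_west_west:
  assumes "2 \<le> k" "k \<le> n"
  shows "{w. length w = n \<and> \<not> w ! (k - 2) \<and> \<not> w ! (k - 1)}
    = {w. length w = k - 2 + length [False, False] + (n - k)
          \<and> take (length [False, False]) (drop (k - 2) w) = [False, False]}"
proof -
  have "Suc (k - 2) = k - 1"
    using assms by simp
  then have take_eq: "take (length [False, False]) (drop (k - 2) w) = [w ! (k - 2), w ! (k - 1)]"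
    if "length w = n" for w
    using that assms take_two_drop[of "k - 2" w] by (simp add: numeral_2_eq_2)
  have len: "k - 2 + length [False, False] + (n - k) = n"
    using assms by simp
  show ?thesis
    unfolding len
  proof (rule Collect_cong)
    fix w :: "bool list"
    show "(length w = n \<and> \<not> w ! (k - 2) \<and> \<not> w ! (k - 1))
        = (length w = n \<and> take (length [False, False]) (drop (k - 2) w) = [False, False])"
      using take_eq[of w] by (cases "length w = n") auto
  qed
qed

lemma card_typeB_tableaux_west_west:
  assumes "2 \<le> k" "k \<le> n"
  shows "real (card {t \<in> typeB_tableaux n. \<not> fst t ! (k - 2) \<and> \<not> fst t ! (k - 1)})
     = fact n * 2 ^ n - (2 * real (n - k) + 3) * (fact (n - 1) * 2 ^ (n - 1))
       + (real (n - k) + 1) ^ 2 * (fact (n - 2) * 2 ^ (n - 2))"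
proof -
  let ?a = "k - 2" and ?b = "n - k"
  let ?S = "\<lambda>j. real (\<Sum>m\<le>n. \<Sum>u | length u = ?a. ext_count u j m)"
  note words = words_west_west[OF assms]
  have "card {t \<in> typeB_tableaux n. \<not> fst t ! (k - 2) \<and> \<not> fst t ! (k - 1)}
      = (\<Sum>w | length w = n \<and> \<not> w ! (k - 2) \<and> \<not> w ! (k - 1). \<Sum>m\<le>n. tab_count w m)"
    unfolding card_typeB_tableaux_words[of n "\<lambda>w. \<not> w ! (k - 2) \<and> \<not> w ! (k - 1)"]
    by (intro sum.cong refl) (simp add: card_typeB_tableaux_shape)
  also have "\<dots> = (\<Sum>u | length u = ?a. \<Sum>x | length x = ?b. \<Sum>m\<le>n. tab_count (u @ [False, False] @ x) m)"
    unfolding words by (rule sum_words_split)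
  also have "\<dots> = (\<Sum>m\<le>n. \<Sum>u | length u = ?a. ext_count (u @ [False, False]) ?b m)"
    by (simp add: ext_count_def sum.swap[of _ "{..n}"])
  finally have card_eq: "real (card {t \<in> typeB_tableaux n. \<not> fst t ! (k - 2) \<and> \<not> fst t ! (k - 1)})
      = ?S (?b + 2) - (2 * real ?b + 3) * ?S (?b + 1) + (real ?b + 1) ^ 2 * ?S ?b"
    by (simp add: ext_count_snoc_west_west sum.distrib sum_subtractf sum_distrib_left)
  have "?a + (?b + 2) = n" "?a + (?b + 1) = n - 1" "?a + ?b = n - 2"
    using assms by auto
  moreover have "?S j = fact (?a + j) * 2 ^ (?a + j)" if "?a + j \<le> n" for j
    unfolding sum_ext_count[OF that] by simp
  ultimately have "?S (?b + 2) = fact n * 2 ^ n" "?S (?b + 1) = fact (n - 1) * 2 ^ (n - 1)"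
    "?S ?b = fact (n - 2) * 2 ^ (n - 2)"
    by (metis diff_le_self order_refl)+
  with card_eq show ?thesis
    by (simp only:)
qed

lemma fact_mult_two_pow_pred:
  assumes "2 \<le> n"
  shows "fact (n - 1) * 2 ^ (n - 1) = 2 * (real n - 1) * (fact (n - 2) * 2 ^ (n - 2))"
    and "fact n * 2 ^ n = 4 * real n * (real n - 1) * (fact (n - 2) * 2 ^ (n - 2))"
proof -
  have step: "fact (Suc j) * 2 ^ Suc j = 2 * real (Suc j) * (fact j * 2 ^ j)" for j
    by (simp add: algebra_simps)
  have "n - 1 = Suc (n - 2)" "n = Suc (n - 1)"
    using assms by simp_all
  then show "fact (n - 1) * 2 ^ (n - 1) = 2 * (real n - 1) * (fact (n - 2) * 2 ^ (n - 2))"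
    and "fact n * 2 ^ n = 4 * real n * (real n - 1) * (fact (n - 2) * 2 ^ (n - 2))"
    using step[of "n - 2"] step[of "n - 1"] assms by (simp_all add: of_nat_diff)
qed

theorem mainTheorem10:
  fixes n k :: nat
  assumes "2 \<le> k" and "k \<le> n"
  shows "prob_B n (\<lambda>(w, F). west_step w k \<and> west_step w (k - 1))
    = real k / real n - 3 / (2 * real n)
      + (real n - real k + 1) ^ 2 / (4 * real n * (real n - 1))"
proof -
  define z :: real where "z = fact (n - 2) * 2 ^ (n - 2)"
  have "z > 0" "real n > 1"
    using assms by (simp_all add: z_def)
  have event: "{t \<in> typeB_tableaux n. (\<lambda>(w, F). west_step w k \<and> west_step w (k - 1)) t}
      = {t \<in> typeB_tableaux n. \<not> fst t ! (k - 2) \<and> \<not> fst t ! (k - 1)}"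
    by (auto simp: west_step_def numeral_2_eq_2)
  have total: "real (card (typeB_tableaux n)) = fact n * 2 ^ n"
    by (simp add: card_typeB_tableaux)
  have "prob_B n (\<lambda>(w, F). west_step w k \<and> west_step w (k - 1))
      = (4 * real n * (real n - 1) * z - (2 * (real n - real k) + 3) * (2 * (real n - 1) * z)
         + (real n - real k + 1) ^ 2 * z) / (4 * real n * (real n - 1) * z)"
    using assms unfolding prob_B_def event total card_typeB_tableaux_west_west[OF assms]
      fact_mult_two_pow_pred[OF order.trans[OF assms]] z_def[symmetric]
    by (simp add: of_nat_diff)
  also have "\<dots> = real k / real n - 3 / (2 * real n) + (real n - real k + 1) ^ 2 / (4 * real n * (real n - 1))"
    using \<open>z > 0\<close> \<open>real n > 1\<close> by (simp add: field_simps)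
  finally show ?thesis .
qed

end
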